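(* Let $p>155$ be a prime, let $G$ be a cyclic group of order $p$, and let $S$ be an unsplittable minimal zero-sum sequence over $G$ of length $|S|=\frac{p-1}{2}$. Then there do not exist $g\in G$ and integers $r_1\ge r_2\ge r_3>0$ such that $S=g^{r_1}\big(\frac{p-1}{2}g\big)^{r_2}\big(\frac{p+3}{2}g\big)^{r_3}$.
   Context: A sequence over $G$ is a finite unordered list of elements of $G$ with repetition allowed, written multiplicatively; $h^r$ denotes $r$ copies of $h$ and $tg$ is the $t$-fold multiple of $g$. $|S|$ is the length, $\sigma(S)$ the sum of terms, and $\operatorname{supp}(S)$ the set of distinct elements occurring. $S$ is a minimal zero-sum sequence if $\sigma(S)=0$ and no subsequence $U$ with $1\le|U|<|S|$ has $\sigma(U)=0$. A minimal zero-sum sequence $S$ is unsplittable if there do not exist $h\in\operatorname{supp}(S)$ and $y,z\in G$ with $y+z=h$ such that the sequence obtained from $S$ by replacing one copy of $h$ with the two terms $y,z$ is again a minimal zero-sum sequence. *)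

theory Defs
  imports Main "HOL-Library.Multiset" "HOL-Computational_Algebra.Primes"
begin

primrec nmult :: "nat \<Rightarrow> 'a::monoid_add \<Rightarrow> 'a" where
  "nmult 0 g = 0"
| "nmult (Suc n) g = g + nmult n g"

definition cyclic_group :: "'a::ab_group_add itself \<Rightarrow> bool" where
  "cyclic_group _ \<longleftrightarrow> (\<exists>g::'a. \<forall>x::'a. \<exists>n. x = nmult n g)"

definition minimal_zero_sum :: "'a::ab_group_add multiset \<Rightarrow> bool" where
  "minimal_zero_sum S \<longleftrightarrow> sum_mset S = 0 \<and>
     \<not> (\<exists>U. U \<subseteq># S \<and> 1 \<le> size U \<and> size U < size S \<and> sum_mset U = 0)"

definition unsplittable :: "'a::ab_group_add multiset \<Rightarrow> bool" where
  "unsplittable S \<longleftrightarrow> minimal_zero_sum S \<and>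
     \<not> (\<exists>h y z. h \<in># S \<and> y + z = h \<and> minimal_zero_sum (S - {#h#} + {#y, z#}))"

end

theory Submission
  imports Defs
begin

text \<open>The sum of such a sequence is \<open>m g\<close> with \<open>m = r\<^sub>1 + r\<^sub>2 (p - 1)/2 + r\<^sub>3 (p + 3)/2\<close>,
  and \<open>2m \<equiv> 2 r\<^sub>1 + 3 r\<^sub>3 - r\<^sub>2 (mod p)\<close>, a residue strictly between \<open>0\<close> and \<open>p\<close> because
  \<open>r\<^sub>1 \<ge> r\<^sub>2 \<ge> r\<^sub>3 > 0\<close> and \<open>r\<^sub>1 + r\<^sub>2 + r\<^sub>3 = (p - 1)/2\<close>. Since every element of a group of
  prime order \<open>p\<close> is killed by \<open>p\<close>, \<open>m g = 0\<close> forces \<open>g = 0\<close>; but a minimal zero-sum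
  sequence of length greater than one cannot contain \<open>0\<close>.\<close>

lemma nmult_add: "nmult (m + n) g = nmult m g + nmult n g"
  by (induction m) (auto simp: add.assoc)

lemma nmult_mult: "nmult (m * n) g = nmult m (nmult n g)"
  by (induction m) (auto simp: nmult_add)

lemma nmult_0_right [simp]: "nmult n (0::'a::monoid_add) = 0"
  by (induction n) auto

lemma sum_mset_replicate_mset_nmult: "sum_mset (replicate_mset n g) = nmult n g"
  by (induction n) auto

lemma sum_constant_nmult: "(\<Sum>_\<in>A. g) = nmult (card A) (g::'a::comm_monoid_add)"
  by (induction A rule: infinite_finite_induct) auto

text \<open>Translation by \<open>x\<close> permutes the group, so \<open>\<Sum>y. (x + y) = \<Sum>y. y\<close>.\<close>

lemma nmult_card_UNIV_eq_0:
  fixes x :: "'a::ab_group_add"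
  assumes "finite (UNIV :: 'a set)"
  shows "nmult (card (UNIV :: 'a set)) x = 0"
proof -
  have "(\<Sum>y\<in>UNIV. x + y) = (\<Sum>y\<in>UNIV. y)"
    using sum.reindex_bij_betw[OF bij_plus[of x], of id] by simp
  then show ?thesis
    by (simp add: sum.distrib sum_constant_nmult)
qed

lemma nmult_gcd_eq_0:
  assumes "nmult m g = 0" and "nmult n (g::'a::ab_group_add) = 0"
  shows "nmult (gcd m n) g = 0"
proof (cases "m = 0")
  case True
  then show ?thesis using assms by simp
next
  case False
  then obtain x y where "m * x = n * y + gcd m n"
    using bezout_nat by blast
  then have "nmult x (nmult m g) = nmult y (nmult n g) + nmult (gcd m n) g"
    by (metis nmult_add nmult_mult mult.commute)
  then show ?thesis using assms by simp
qed

lemma minimal_zero_sum_zero_not_mem: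
  assumes "minimal_zero_sum S" and "size S > 1"
  shows "0 \<notin># S"
proof
  assume "0 \<in># S"
  then have "{#0#} \<subseteq># S" by simp
  then show False
    using assms unfolding minimal_zero_sum_def by (metis size_single sum_mset.singleton order_refl)
qed

lemma sum_mset_three_multiples:
  "sum_mset (replicate_mset r1 g + replicate_mset r2 (nmult k2 g) + replicate_mset r3 (nmult k3 g))
     = nmult (r1 + r2 * k2 + r3 * k3) g"
  by (simp add: sum_mset_replicate_mset_nmult nmult_add nmult_mult)

lemma odd_not_dvd_three_term_weight:
  fixes p r1 r2 r3 :: nat
  assumes "odd p" and "r1 + r2 + r3 = (p - 1) div 2"
    and "r1 \<ge> r2" and "r2 \<ge> r3" and "r3 > 0"
  shows "\<not> p dvd r1 + r2 * ((p - 1) div 2) + r3 * ((p + 3) div 2)"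
proof
  define n where "n = (p - 1) div 2"
  define t where "t = 2 * r1 + 3 * r3 - r2"
  have p: "p = 2 * n + 1" and p3: "(p + 3) div 2 = n + 2"
    using \<open>odd p\<close> unfolding n_def by presburger+
  have t: "0 < t" "t < p"
    using assms p unfolding n_def t_def by auto
  have "t + r2 = 2 * r1 + 3 * r3"
    using assms unfolding t_def by simp
  then have weight: "2 * (r1 + r2 * n + r3 * (n + 2)) = t + p * (r2 + r3)"
    unfolding p by (simp add: algebra_simps)
  assume "p dvd r1 + r2 * ((p - 1) div 2) + r3 * ((p + 3) div 2)"
  then have "p dvd 2 * (r1 + r2 * n + r3 * (n + 2))"
    unfolding p3 n_def[symmetric] by (rule dvd_mult)
  then have "p dvd t + p * (r2 + r3)"
    unfolding weight .
  then have "p dvd t"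
    by (simp add: dvd_add_left_iff)
  then show False
    using t by (simp add: nat_dvd_not_less)
qed

theorem lemma3p4:
  fixes S :: "'a::ab_group_add multiset" and p :: nat
  assumes "prime p" and "p > 155"
    and "card (UNIV :: 'a set) = p" and "cyclic_group TYPE('a)"
    and "unsplittable S" and "size S = (p - 1) div 2"
  shows "\<not> (\<exists>(g::'a) (r1::nat) r2 r3. r1 \<ge> r2 \<and> r2 \<ge> r3 \<and> r3 > 0 \<and>
            S = replicate_mset r1 g + replicate_mset r2 (nmult ((p - 1) div 2) g)
                + replicate_mset r3 (nmult ((p + 3) div 2) g))"
proof
  assume "\<exists>(g::'a) (r1::nat) r2 r3. r1 \<ge> r2 \<and> r2 \<ge> r3 \<and> r3 > 0 \<and>
            S = replicate_mset r1 g + replicate_mset r2 (nmult ((p - 1) div 2) g)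
                + replicate_mset r3 (nmult ((p + 3) div 2) g)"
  then obtain g r1 r2 r3 where r: "r1 \<ge> r2" "r2 \<ge> r3" "r3 > 0"
    and S: "S = replicate_mset r1 g + replicate_mset r2 (nmult ((p - 1) div 2) g)
                + replicate_mset r3 (nmult ((p + 3) div 2) g)" by blast
  define m where "m = r1 + r2 * ((p - 1) div 2) + r3 * ((p + 3) div 2)"
  have minimal: "minimal_zero_sum S"
    using \<open>unsplittable S\<close> unfolding unsplittable_def by simp
  have finite: "finite (UNIV :: 'a set)"
    using \<open>card UNIV = p\<close> \<open>p > 155\<close> card.infinite by fastforce
  have "\<not> p dvd m"
    using odd_not_dvd_three_term_weight[OF _ _ r] prime_odd_nat \<open>prime p\<close> \<open>p > 155\<close>
      \<open>size S = (p - 1) div 2\<close>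
    unfolding S m_def by simp
  then have "gcd m p = 1"
    using \<open>prime p\<close> prime_imp_coprime coprime_commute coprime_iff_gcd_eq_1 by metis
  moreover have "nmult m g = 0"
    using minimal sum_mset_three_multiples[of r1 g r2] unfolding minimal_zero_sum_def S m_def by simp
  moreover have "nmult p g = 0"
    using nmult_card_UNIV_eq_0[OF finite, of g] \<open>card UNIV = p\<close> by simp
  ultimately have "g = 0"
    using nmult_gcd_eq_0[of m g p] by simp
  moreover have "0 \<notin># S"
    using minimal_zero_sum_zero_not_mem[OF minimal] \<open>size S = (p - 1) div 2\<close> \<open>p > 155\<close> by simp
  ultimately show False
    using S r by simp
qed

end
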